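(* Let $\Gamma^{-1}$ be an irreducible $n\times n$ $M$-matrix (the inverse of a strictly positive definite matrix $\Gamma$), and suppose that $(\Gamma^{-1})_{i,j}=0$ for some $i\neq j$. Let $k=\min\{l>1: (\Gamma^{-l})_{i,j}\neq0\}$, where $\Gamma^{-l}=(\Gamma^{-1})^l$. Then $k\le n-1$ and $(\Gamma^{-k})_{i,j}=(-1)^k\,|(\Gamma^{-k})_{i,j}|$.
   Context: A non-singular matrix $A$ is an $M$-matrix if all entries of $A^{-1}$ are non-negative and $A_{i,j}\le0$ for $i\ne j$. A symmetric matrix is irreducible if it is not a direct sum of square matrices. *)

theory Defs
  imports "HOL-Analysis.Analysis"
begin

text \<open>Matrix power w.r.t. matrix multiplication (the type-class power on real^'n^'n
  is componentwise, so we define the genuine matrix power).\<close>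
definition matpow :: "real^'n^'n \<Rightarrow> nat \<Rightarrow> real^'n^'n" where
  "matpow A l = (((**) A) ^^ l) (mat 1)"

definition M_matrix :: "real^'n^'n \<Rightarrow> bool" where
  "M_matrix A \<longleftrightarrow> invertible A \<and> (\<forall>i j. matrix_inv A $ i $ j \<ge> 0)
     \<and> (\<forall>i j. i \<noteq> j \<longrightarrow> A $ i $ j \<le> 0)"

text \<open>Irreducible: not (up to simultaneous permutation of rows and columns) a direct sum
  of square matrices, i.e. no proper nonempty index set S decouples from its complement.\<close>
definition irreducible_mat :: "real^'n^'n \<Rightarrow> bool" where
  "irreducible_mat A \<longleftrightarrow> \<not> (\<exists>S. S \<noteq> {} \<and> S \<noteq> UNIV \<and>
     (\<forall>i\<in>S. \<forall>j. j \<notin> S \<longrightarrow> A $ i $ j = 0 \<and> A $ j $ i = 0))"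

end

theory Submission
  imports Defs
begin

text \<open>Let \<open>A = \<Gamma>\<^sup>-\<^sup>1\<close> and let \<open>R\<^sub>l\<close> be the set of indices reachable from \<open>i\<close> by a path of
  at most \<open>l\<close> steps along non-zero entries of \<open>A\<close>. Expanding \<open>(A\<^sup>l)\<^sub>i\<^sub>b\<close> as a sum over such
  paths shows that it vanishes for \<open>b \<notin> R\<^sub>l\<close>, and that for \<open>b\<close> first reached at step \<open>l\<close> only
  paths through off-diagonal (hence negative) entries contribute, all with the same sign
  \<open>(-1)\<^sup>l\<close> and at least one of them non-zero. As \<open>A\<close> is symmetric and irreducible, every
  index, in particular \<open>j\<close>, is reached at some first step \<open>k\<close>; then \<open>k > 1\<close> since
  \<open>A\<^sub>i\<^sub>j = 0\<close>, and \<open>k \<le> n - 1\<close> since the sets \<open>R\<^sub>0 \<subset> \<dots> \<subset> R\<^sub>k\<close> grow strictly.\<close>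

lemma matpow_0 [simp]: "matpow A 0 = mat 1"
  by (simp add: matpow_def)

lemma matpow_Suc_right: "matpow A (Suc l) = matpow A l ** A"
proof (induction l)
  case 0
  show ?case by (simp add: matpow_def)
next
  case (Suc l)
  have "matpow A (Suc (Suc l)) = A ** matpow A (Suc l)" by (simp add: matpow_def)
  also have "\<dots> = (A ** matpow A l) ** A" using Suc by (simp add: matrix_mul_assoc)
  also have "A ** matpow A l = matpow A (Suc l)" by (simp add: matpow_def)
  finally show ?case .
qed

lemma matrix_inv_inverse:
  assumes "invertible (A :: 'a::semiring_1^'n^'n)"
  shows "A ** matrix_inv A = mat 1" and "matrix_inv A ** A = mat 1"
  using someI_ex[OF assms[unfolded invertible_def]] unfolding matrix_inv_def by auto

lemma positive_definite_invertible:
  fixes G :: "real^'n^'n"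
  assumes "\<And>x. x \<noteq> 0 \<Longrightarrow> x \<bullet> (G *v x) > 0"
  shows "invertible G"
proof -
  have "\<forall>x. G *v x = 0 \<longrightarrow> x = 0"
    using assms by (metis inner_zero_right less_irrefl)
  then show ?thesis
    using matrix_left_invertible_ker invertible_left_inverse by blast
qed

lemma symmetric_matrix_inv:
  fixes G :: "'a::field^'n^'n"
  assumes "invertible G" and "transpose G = G"
  shows "transpose (matrix_inv G) = matrix_inv G"
proof -
  let ?B = "matrix_inv G"
  have "transpose (?B ** G) = mat 1"
    using matrix_inv_inverse[OF assms(1)] by (simp add: transpose_mat)
  then have right_inv: "G ** transpose ?B = mat 1"
    using assms(2) by (simp add: matrix_transpose_mul)
  have "transpose ?B = (?B ** G) ** transpose ?B"
    using matrix_inv_inverse[OF assms(1)] by simp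
  also have "\<dots> = ?B" by (simp add: matrix_mul_assoc[symmetric] right_inv)
  finally show ?thesis .
qed

primrec reach :: "'a::zero^'n^'n \<Rightarrow> 'n \<Rightarrow> nat \<Rightarrow> 'n set" where
  "reach A i 0 = {i}"
| "reach A i (Suc l) = reach A i l \<union> {b. \<exists>a\<in>reach A i l. A $ a $ b \<noteq> 0}"

lemma reach_mono: "l \<le> m \<Longrightarrow> reach A i l \<subseteq> reach A i m"
  by (rule lift_Suc_mono_le[of "reach A i"]) auto

lemma reach_const_from: "reach A i (Suc l) = reach A i l \<Longrightarrow> reach A i (l + m) = reach A i l"
  by (induction m) auto

lemma matpow_outside_reach:
  "b \<notin> reach A i l \<Longrightarrow> matpow A l $ i $ b = 0"
proof (induction l arbitrary: b)
  case 0
  then show ?case by (simp add: mat_def)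
next
  case (Suc l)
  have "matpow A l $ i $ c * A $ c $ b = 0" for c
    using Suc by (cases "c \<in> reach A i l") auto
  then have "(\<Sum>c\<in>UNIV. matpow A l $ i $ c * A $ c $ b) = 0" by (intro sum.neutral) blast
  then show ?case by (simp add: matpow_Suc_right matrix_matrix_mult_def)
qed

text \<open>The summands of \<open>(A\<^sup>l\<^sup>+\<^sup>1)\<^sub>i\<^sub>b = \<Sum>\<^sub>c (A\<^sup>l)\<^sub>i\<^sub>c A\<^sub>c\<^sub>b\<close> with \<open>c\<close> reached before step \<open>l\<close> vanish,
  since otherwise \<open>b\<close> would be reached by step \<open>l\<close>; the remaining ones all have sign
  \<open>(-1)\<^sup>l\<^sup>+\<^sup>1\<close>, and the predecessor of \<open>b\<close> on a shortest path gives a non-zero one.\<close>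

lemma matpow_sign_first_reached:
  assumes offdiag: "\<And>a b. a \<noteq> b \<Longrightarrow> A $ a $ b \<le> 0"
    and "b \<in> reach A i l" and "\<forall>m<l. b \<notin> reach A i m"
  shows "(-1) ^ l * matpow A l $ i $ b > 0"
  using assms(2,3)
proof (induction l arbitrary: b)
  case 0
  then show ?case by (simp add: mat_def)
next
  case (Suc l)
  have b_new: "b \<notin> reach A i l" using Suc.prems(2) by blast
  have earlier_zero: "A $ c $ b = 0" if "c \<in> reach A i m" "m < l" for c m
    using that b_new reach_mono[of "Suc m" l A i] by auto
  obtain c0 where c0: "c0 \<in> reach A i l" "A $ c0 $ b \<noteq> 0"
    using Suc.prems b_new by auto
  have c0_new: "\<forall>m<l. c0 \<notin> reach A i m" using c0(2) earlier_zero by blast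
  define t where "t c = ((-1) ^ l * matpow A l $ i $ c) * (- A $ c $ b)" for c
  have "t c \<ge> 0" for c
  proof (cases "c \<in> reach A i l")
    case True
    show ?thesis
    proof (cases "\<forall>m<l. c \<notin> reach A i m")
      case True
      with \<open>c \<in> reach A i l\<close> have "(-1) ^ l * matpow A l $ i $ c > 0" by (rule Suc.IH)
      moreover have "A $ c $ b \<le> 0" using \<open>c \<in> reach A i l\<close> b_new by (intro offdiag) blast
      ultimately show ?thesis unfolding t_def by (simp add: mult_nonneg_nonpos)
    next
      case False
      then show ?thesis using earlier_zero by (auto simp: t_def)
    qed
  next
    case False
    then show ?thesis by (simp add: t_def matpow_outside_reach)
  qed
  moreover have "t c0 > 0"
  proof -
    have "(-1) ^ l * matpow A l $ i $ c0 > 0" using Suc.IH c0(1) c0_new by blast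
    moreover have "A $ c0 $ b < 0" using offdiag[of c0 b] c0 b_new by fastforce
    ultimately show ?thesis unfolding t_def by (simp add: mult_pos_neg)
  qed
  ultimately have "sum t UNIV > 0" by (intro sum_pos2[of UNIV c0]) auto
  then show ?case
    by (simp add: t_def matpow_Suc_right matrix_matrix_mult_def sum_distrib_left algebra_simps)
qed

lemma irreducible_reach:
  fixes A :: "real^'n^'n"
  assumes "irreducible_mat A" and "transpose A = A"
  shows "\<exists>l. j \<in> reach A i l"
proof -
  define S where "S = (\<Union>l. reach A i l)"
  have closed: "b \<in> S" if "a \<in> S" "A $ a $ b \<noteq> 0" for a b
  proof -
    obtain l where "a \<in> reach A i l" using \<open>a \<in> S\<close> unfolding S_def by blast
    then have "b \<in> reach A i (Suc l)" using \<open>A $ a $ b \<noteq> 0\<close> by auto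
    then show ?thesis unfolding S_def by blast
  qed
  have symm: "A $ a $ b = A $ b $ a" for a b
    using assms(2) by (metis transpose_def vec_lambda_beta)
  have "i \<in> S" unfolding S_def using reach.simps(1) by blast
  moreover have "\<forall>a\<in>S. \<forall>b. b \<notin> S \<longrightarrow> A $ a $ b = 0 \<and> A $ b $ a = 0"
    using closed symm by fastforce
  ultimately have "S = UNIV" using assms(1) unfolding irreducible_mat_def by blast
  then show ?thesis unfolding S_def by blast
qed

lemma first_reach_less_card:
  fixes A :: "'a::zero^'n^'n"
  assumes "j \<in> reach A i d" and "\<forall>l<d. j \<notin> reach A i l"
  shows "d < CARD('n)"
proof -
  have "reach A i l \<subset> reach A i (Suc l)" if "l < d" for l
  proof -
    have "reach A i (l + (d - l)) \<noteq> reach A i l"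
      using assms that by (metis le_add_diff_inverse less_imp_le)
    then have "reach A i (Suc l) \<noteq> reach A i l" using reach_const_from by blast
    then show ?thesis by auto
  qed
  then have "l \<le> d \<Longrightarrow> Suc l \<le> card (reach A i l)" for l
  proof (induction l)
    case (Suc l)
    then have "card (reach A i l) < card (reach A i (Suc l))"
      by (intro psubset_card_mono) auto
    with Suc show ?case by simp
  qed simp
  moreover have "card (reach A i d) \<le> CARD('n)" by (rule card_mono) auto
  ultimately show ?thesis by fastforce
qed

lemma sign_power_abs:
  fixes x :: real
  assumes "(-1) ^ k * x > 0"
  shows "x = (-1) ^ k * \<bar>x\<bar>"
  using assms by (cases "even k") auto

theorem lemma2p2:
  fixes G :: "real^'n^'n" and i j :: 'n
  assumes sym: "transpose G = G"
    and posdef: "\<And>x. x \<noteq> 0 \<Longrightarrow> x \<bullet> (G *v x) > 0"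
    and M: "M_matrix (matrix_inv G)"
    and irr: "irreducible_mat (matrix_inv G)"
    and ij: "i \<noteq> j"
    and zero: "matrix_inv G $ i $ j = 0"
  shows "\<exists>k. 1 < k \<and> matpow (matrix_inv G) k $ i $ j \<noteq> 0
            \<and> (\<forall>l. 1 < l \<and> l < k \<longrightarrow> matpow (matrix_inv G) l $ i $ j = 0)
            \<and> k \<le> CARD('n) - 1
            \<and> matpow (matrix_inv G) k $ i $ j = (-1) ^ k * \<bar>matpow (matrix_inv G) k $ i $ j\<bar>"
proof -
  define A where "A = matrix_inv G"
  have "transpose A = A"
    unfolding A_def using symmetric_matrix_inv positive_definite_invertible posdef sym by blast
  then have "\<exists>l. j \<in> reach A i l" using irr irreducible_reach unfolding A_def by blast
  define k where "k = (LEAST l. j \<in> reach A i l)"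
  have reached: "j \<in> reach A i k" unfolding k_def by (rule LeastI_ex) fact
  have unreached: "\<forall>l<k. j \<notin> reach A i l" unfolding k_def using not_less_Least by blast
  have "k \<noteq> 0" using reached ij by (cases k) auto
  moreover have "k \<noteq> 1" using reached ij zero unfolding A_def by auto
  ultimately have "1 < k" by linarith
  moreover have "k \<le> CARD('n) - 1" using first_reach_less_card[OF reached unreached] by simp
  moreover have "\<forall>l. 1 < l \<and> l < k \<longrightarrow> matpow A l $ i $ j = 0"
    using unreached matpow_outside_reach by blast
  moreover have "(-1) ^ k * matpow A k $ i $ j > 0"
    using M reached unreached unfolding M_matrix_def A_def
    by (intro matpow_sign_first_reached) auto
  then have "matpow A k $ i $ j \<noteq> 0" and "matpow A k $ i $ j = (-1) ^ k * \<bar>matpow A k $ i $ j\<bar>"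
    using sign_power_abs by auto
  ultimately show ?thesis unfolding A_def by blast
qed

end
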